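(* If $\gamma\in\mathcal{M}_k\otimes\mathcal{M}_m$ is a state with $\gamma^\Gamma\ge0$ (positive under partial transpose), then $\gamma\in CR_{k,m}$.
   Context: $\mathcal{M}_k$ denotes the complex $k\times k$ matrices, and $\mathcal{M}_k\otimes\mathcal{M}_m$ is identified with $\mathcal{M}_{km}$ via the Kronecker product. A state is a positive semidefinite Hermitian matrix (not necessarily of trace one). The partial transpose of $\gamma=\sum_iA_i\otimes B_i$ is $\gamma^\Gamma=\sum_iA_i\otimes B_i^t$. For $\gamma=\sum_{i=1}^nA_i\otimes B_i\in\mathcal{M}_k\otimes\mathcal{M}_m$ define $G_\gamma:\mathcal{M}_k\to\mathcal{M}_m$, $G_\gamma(X)=\sum_i\mathrm{tr}(A_iX)B_i$, and $F_\gamma:\mathcal{M}_m\to\mathcal{M}_k$, $F_\gamma(Y)=\sum_i\mathrm{tr}(B_iY)A_i$. A linear map is positive if it maps positive semidefinite matrices to positive semidefinite matrices, and self-adjoint if self-adjoint with respect to $\langle X,Y\rangle=\mathrm{tr}(XY^* )$. For orthogonal projections $V,W$, $V\mathcal{M}_kW=\{VXW:X\in\mathcal{M}_k\}$. Given an orthogonal projection $V\in\mathcal{M}_k$ and a positive map $T:V\mathcal{M}_kV\to V\mathcal{M}_kV$, $T$ is irreducible if the only orthogonal projections $W$ with $W\mathcal{M}_kW\subseteq V\mathcal{M}_kV$ and $T(W\mathcal{M}_kW)\subseteq W\mathcal{M}_kW$ are $W=0$ and $W=V$. A self-adjoint positive map $T:\mathcal{M}_k\to\mathcal{M}_k$ is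 completely reducible if there are orthogonal projections $W_1,\dots,W_l$ with $W_iW_j=0$ for $i\ne j$, $T(W_i\mathcal{M}_kW_i)\subseteq W_i\mathcal{M}_kW_i$ and $T|_{W_i\mathcal{M}_kW_i}$ irreducible for every $i$, and $T|_R\equiv0$, where $R$ is the orthogonal complement (trace inner product) of $\bigoplus_iW_i\mathcal{M}_kW_i$ in $\mathcal{M}_k$. $CR_{k,m}$ is the set of states $\gamma\in\mathcal{M}_k\otimes\mathcal{M}_m$ such that $F_\gamma\circ G_\gamma:\mathcal{M}_k\to\mathcal{M}_k$ is completely reducible. *)

theory Defs
  imports "HOL-Analysis.Analysis"
begin

text \<open>Matrices in M_k are complex^'k^'k (the dimension k = CARD('k) is a type).
  M_k (x) M_m is identified with M_{km} via the Kronecker product; we index the rows and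
  columns of a matrix in M_k (x) M_m by pairs (i,a) with i in 'k and a in 'm, so that
  (A (x) B) at ((i,a),(j,b)) equals A_ij * B_ab.\<close>

definition kron :: "complex^('k::finite)^'k \<Rightarrow> complex^('m::finite)^'m \<Rightarrow> complex^(('k::finite)\<times>('m::finite))^('k\<times>'m)" where
  "kron A B = (\<chi> p q. A $ fst p $ fst q * B $ snd p $ snd q)"

definition adj :: "complex^('n::finite)^'n \<Rightarrow> complex^('n::finite)^'n" where
  "adj A = (\<chi> i j. cnj (A $ j $ i))"

definition hermitian :: "complex^('n::finite)^'n \<Rightarrow> bool" where
  "hermitian A \<longleftrightarrow> adj A = A"

text \<open>Positive semidefinite Hermitian matrix (a state, not necessarily of trace one).\<close>
definition psd :: "complex^('n::finite)^'n \<Rightarrow> bool" where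
  "psd A \<longleftrightarrow> hermitian A \<and>
     (\<forall>x::complex^'n::finite. 0 \<le> Re (\<Sum>i\<in>UNIV. \<Sum>j\<in>UNIV. cnj (x $ i) * A $ i $ j * x $ j))"

text \<open>Partial transpose: (sum_i A_i (x) B_i)^Gamma = sum_i A_i (x) B_i^t, i.e. entrywise
  gamma^Gamma_{(i,a),(j,b)} = gamma_{(i,b),(j,a)}.\<close>
definition ptrans :: "complex^(('k::finite)\<times>('m::finite))^('k\<times>'m) \<Rightarrow> complex^(('k::finite)\<times>('m::finite))^('k\<times>'m)" where
  "ptrans \<gamma> = (\<chi> p q. \<gamma> $ (fst p, snd q) $ (fst q, snd p))"

text \<open>G_gamma(X) = sum_n tr(A_n X) B_n, written out entrywise:
  G(X)_{ab} = sum_{i,j} gamma_{(i,a),(j,b)} X_{ji}.\<close>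
definition Gmap :: "complex^(('k::finite)\<times>('m::finite))^('k\<times>'m) \<Rightarrow> complex^('k::finite)^'k \<Rightarrow> complex^('m::finite)^'m" where
  "Gmap \<gamma> X = (\<chi> a b. \<Sum>i\<in>UNIV. \<Sum>j\<in>UNIV. \<gamma> $ (i,a) $ (j,b) * X $ j $ i)"

text \<open>F_gamma(Y) = sum_n tr(B_n Y) A_n, entrywise:
  F(Y)_{ij} = sum_{a,b} gamma_{(i,a),(j,b)} Y_{ba}.\<close>
definition Fmap :: "complex^(('k::finite)\<times>('m::finite))^('k\<times>'m) \<Rightarrow> complex^('m::finite)^'m \<Rightarrow> complex^('k::finite)^'k" where
  "Fmap \<gamma> Y = (\<chi> i j. \<Sum>a\<in>UNIV. \<Sum>b\<in>UNIV. \<gamma> $ (i,a) $ (j,b) * Y $ b $ a)"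

definition tr_inner :: "complex^('n::finite)^'n \<Rightarrow> complex^('n::finite)^'n \<Rightarrow> complex" where
  "tr_inner X Y = trace (X ** adj Y)"

definition orth_proj :: "complex^('n::finite)^'n \<Rightarrow> bool" where
  "orth_proj P \<longleftrightarrow> P ** P = P \<and> hermitian P"

definition corner :: "complex^('n::finite)^'n \<Rightarrow> complex^('n::finite)^'n \<Rightarrow> (complex^('n::finite)^'n) set" where
  "corner V W = {V ** X ** W | X. True}"

definition positive_map :: "(complex^('n::finite)^'n \<Rightarrow> complex^('n::finite)^'n) \<Rightarrow> bool" where
  "positive_map T \<longleftrightarrow> linear T \<and> (\<forall>X. psd X \<longrightarrow> psd (T X))"

definition self_adjoint_map :: "(complex^('n::finite)^'n \<Rightarrow> complex^('n::finite)^'n) \<Rightarrow> bool" where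
  "self_adjoint_map T \<longleftrightarrow> (\<forall>X Y. tr_inner (T X) Y = tr_inner X (T Y))"

definition irreducible_on :: "(complex^('n::finite)^'n \<Rightarrow> complex^('n::finite)^'n) \<Rightarrow> complex^('n::finite)^'n \<Rightarrow> bool" where
  "irreducible_on T V \<longleftrightarrow>
     (\<forall>W. orth_proj W \<and> corner W W \<subseteq> corner V V \<and> T ` corner W W \<subseteq> corner W W
          \<longrightarrow> W = 0 \<or> W = V)"

definition corner_sum :: "(complex^('n::finite)^'n) list \<Rightarrow> (complex^('n::finite)^'n) set" where
  "corner_sum Ws = {X. \<exists>Y. (\<forall>i<length Ws. Y i \<in> corner (Ws!i) (Ws!i)) \<and> X = (\<Sum>i<length Ws. Y i)}"

definition orth_compl :: "(complex^('n::finite)^'n) set \<Rightarrow> (complex^('n::finite)^'n) set" where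
  "orth_compl S = {X. \<forall>Y\<in>S. tr_inner X Y = 0}"

definition completely_reducible :: "(complex^('n::finite)^'n \<Rightarrow> complex^('n::finite)^'n) \<Rightarrow> bool" where
  "completely_reducible T \<longleftrightarrow> self_adjoint_map T \<and> positive_map T \<and>
     (\<exists>Ws. (\<forall>i<length Ws. orth_proj (Ws!i)) \<and>
           (\<forall>i<length Ws. \<forall>j<length Ws. i \<noteq> j \<longrightarrow> Ws!i ** Ws!j = 0) \<and>
           (\<forall>i<length Ws. T ` corner (Ws!i) (Ws!i) \<subseteq> corner (Ws!i) (Ws!i)) \<and>
           (\<forall>i<length Ws. irreducible_on T (Ws!i)) \<and>
           (\<forall>X\<in>orth_compl (corner_sum Ws). T X = 0))"

definition CR :: "(complex^(('k::finite)\<times>('m::finite))^('k\<times>'m)) set" where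
  "CR = {\<gamma>. psd \<gamma> \<and> completely_reducible (Fmap \<gamma> \<circ> Gmap \<gamma>)}"

end

theory Submission
  imports Defs
begin

text \<open>Let T = F_\<gamma> \<circ> G_\<gamma>. For a state \<gamma>, G_\<gamma> and F_\<gamma> are positive and adjoint
  to each other for the trace inner product, so T is positive and self-adjoint.

  The heart of the argument: if V is an orthogonal projection with T(V) \<in> V M_k V and
  both \<gamma> and \<gamma>^\<Gamma> are positive, then \<langle>w \<otimes> p, \<gamma>(v \<otimes> q)\<rangle> = 0 whenever V w = 0 and
  V v = v, so G_\<gamma> kills the off-diagonal blocks V X (1 - V) and (1 - V) X V. Writing
  G_\<gamma>(V) = \<Sum> u u^*, the invariance forces \<gamma>(w \<otimes> u) = 0. Split p into a part in span {u},
  handled by this, and a part z orthogonal to every u; then \<langle>z, G_\<gamma>(V) z\<rangle> = 0 gives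
  \<gamma>(v \<otimes> z) = 0, and positivity of \<gamma>^\<Gamma> transfers this to \<langle>w \<otimes> z, \<gamma>(v \<otimes> q)\<rangle> = 0.
  Hence T(X) = T(V X V) + T((1 - V) X (1 - V)).

  Together with self-adjointness this makes the complementary corner invariant as well, so
  induction on the dimension of V M_k V decomposes the identity into mutually orthogonal
  projections with invariant irreducible corners, and the splitting shows that T vanishes on
  the orthogonal complement of their corners.\<close>

lemma matrix_add_rdistrib: "((A::'a::semiring_1^'n^'m) + B) ** C = A ** C + B ** C"
  by (simp add: matrix_matrix_mult_def vec_eq_iff distrib_right sum.distrib)

lemma matrix_diff_ldistrib: "(A::'a::ring_1^'n^'m) ** (B - C) = A ** B - A ** C"
  by (simp add: matrix_matrix_mult_def vec_eq_iff right_diff_distrib sum_subtractf)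

lemma matrix_diff_rdistrib: "((A::'a::ring_1^'n^'m) - B) ** C = A ** C - B ** C"
  by (simp add: matrix_matrix_mult_def vec_eq_iff left_diff_distrib sum_subtractf)

lemma column_matrix_mult: "column c (A ** B) = A *v column c B"
  by (simp add: column_def matrix_matrix_mult_def matrix_vector_mult_def)

lemma adj_matrix_mult: "adj ((A::complex^'n::finite^'n) ** B) = adj B ** adj A"
  by (simp add: adj_def matrix_matrix_mult_def vec_eq_iff mult.commute)

lemma hermitian_cnj_entry: "hermitian A \<Longrightarrow> cnj (A $ i $ j) = A $ j $ i"
  unfolding hermitian_def by (drule arg_cong[where f = "\<lambda>B. B $ j $ i"]) (simp add: adj_def)

lemma hermitianI:
  assumes "\<And>i j. A $ j $ i = cnj (A $ i $ j)"
  shows "hermitian A"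
  unfolding hermitian_def adj_def by (simp add: vec_eq_iff assms[symmetric])

lemma hermitian_diff: "hermitian A \<Longrightarrow> hermitian B \<Longrightarrow> hermitian (A - B)"
  by (rule hermitianI) (simp add: hermitian_cnj_entry)

lemma hermitian_mat: "hermitian (mat (of_real r))"
  by (rule hermitianI) (simp add: mat_def)

definition cinner :: "complex^('n::finite) \<Rightarrow> complex^'n \<Rightarrow> complex" where
  "cinner x y = (\<Sum>i\<in>UNIV. cnj (x $ i) * y $ i)"

lemma cinner_add_left: "cinner (x + y) z = cinner x z + cinner y z"
  and cinner_add_right: "cinner x (y + z) = cinner x y + cinner x z"
  and cinner_diff_left: "cinner (x - y) z = cinner x z - cinner y z"
  and cinner_diff_right: "cinner x (y - z) = cinner x y - cinner x z"
  and cinner_scale_left: "cinner (c *s x) y = cnj c * cinner x y"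
  and cinner_scale_right: "cinner x (c *s y) = c * cinner x y"
  and cinner_zero_left [simp]: "cinner 0 y = 0"
  and cinner_zero_right [simp]: "cinner x 0 = 0"
  by (simp_all add: cinner_def algebra_simps sum.distrib sum_subtractf sum_distrib_left)

lemma cinner_commute: "cinner y x = cnj (cinner x y)"
  by (simp add: cinner_def mult.commute)

lemma cinner_self: "cinner x x = of_real (\<Sum>i\<in>UNIV. (cmod (x $ i))\<^sup>2)"
  unfolding cinner_def of_real_sum by (intro sum.cong refl) (metis complex_norm_square mult.commute)

lemma cinner_self_eq_0_iff: "Re (cinner x x) = 0 \<longleftrightarrow> x = 0"
  by (simp add: cinner_self sum_nonneg_eq_0_iff vec_eq_iff)

lemma cinner_self_nonneg: "0 \<le> Re (cinner x x)"
  by (simp add: cinner_self sum_nonneg)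

lemma cinner_matrix_vector: "cinner x (A *v y) = cinner (adj A *v x) y"
proof -
  have "cinner x (A *v y) = (\<Sum>i\<in>UNIV. \<Sum>j\<in>UNIV. cnj (x $ i) * A $ i $ j * y $ j)"
    by (simp add: cinner_def matrix_vector_mult_def sum_distrib_left mult.assoc)
  also have "\<dots> = (\<Sum>j\<in>UNIV. \<Sum>i\<in>UNIV. cnj (x $ i) * A $ i $ j * y $ j)"
    by (rule sum.swap)
  also have "\<dots> = cinner (adj A *v x) y"
    by (simp add: cinner_def adj_def matrix_vector_mult_def sum_distrib_left sum_distrib_right mult_ac)
  finally show ?thesis .
qed

definition sesq :: "complex^('n::finite)^'n \<Rightarrow> complex^'n \<Rightarrow> complex^'n \<Rightarrow> complex" where
  "sesq A x y = cinner x (A *v y)"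

lemma sesq_expand: "sesq A x y = (\<Sum>i\<in>UNIV. \<Sum>j\<in>UNIV. cnj (x $ i) * A $ i $ j * y $ j)"
  by (simp add: sesq_def cinner_def matrix_vector_mult_def sum_distrib_left mult.assoc)

lemma sesq_add_left: "sesq A (x + y) z = sesq A x z + sesq A y z"
  and sesq_add_right: "sesq A x (y + z) = sesq A x y + sesq A x z"
  and sesq_diff_left: "sesq A (x - y) z = sesq A x z - sesq A y z"
  and sesq_diff_right: "sesq A x (y - z) = sesq A x y - sesq A x z"
  and sesq_scale_left: "sesq A (c *s x) y = cnj c * sesq A x y"
  and sesq_scale_right: "sesq A x (c *s y) = c * sesq A x y"
  and sesq_zero_matrix [simp]: "sesq 0 x y = 0"
  and sesq_add_matrix: "sesq (A + B) x y = sesq A x y + sesq B x y"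
  and sesq_diff_matrix: "sesq (A - B) x y = sesq A x y - sesq B x y"
  by (simp_all add: sesq_def cinner_add_left cinner_add_right cinner_diff_left cinner_diff_right
      cinner_scale_left cinner_scale_right matrix_vector_right_distrib matrix_vector_mult_diff_distrib
      matrix_vector_mult_add_rdistrib matrix_vector_mult_diff_rdistrib vector_scalar_commute)

lemma sesq_hermitian_commute: "hermitian A \<Longrightarrow> sesq A y x = cnj (sesq A x y)"
  unfolding sesq_def hermitian_def by (metis cinner_matrix_vector cinner_commute)

lemma sesq_axis_left: "sesq A (axis i 1) x = (A *v x) $ i"
proof -
  have "sesq A (axis i 1) x = (\<Sum>j\<in>UNIV. if j = i then (A *v x) $ j else 0)"
    unfolding sesq_def cinner_def by (intro sum.cong refl) (simp add: axis_def)
  then show ?thesis by simp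
qed

lemma matrix_vector_axis: "A *v axis j 1 = column j A"
  by (simp add: matrix_vector_mult_def column_def axis_def if_distrib cong: if_cong)

lemma sesq_axis: "sesq A (axis i 1) (axis j 1) = A $ i $ j"
  by (simp add: sesq_axis_left matrix_vector_axis column_def)

section \<open>Positive semidefinite matrices\<close>

lemma psd_iff_sesq: "psd A \<longleftrightarrow> hermitian A \<and> (\<forall>x. 0 \<le> Re (sesq A x x))"
  by (simp add: psd_def sesq_expand)

lemma psd_hermitian: "psd A \<Longrightarrow> hermitian A"
  by (simp add: psd_def)

lemma psd_sesq_nonneg: "psd A \<Longrightarrow> 0 \<le> Re (sesq A x x)"
  by (simp add: psd_iff_sesq)

lemma quadratic_nonneg_imp_linear_coeff_0:
  fixes a b :: real
  assumes "\<And>t. 0 \<le> a * t + b * t\<^sup>2" and "0 \<le> b"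
  shows "a = 0"
proof -
  have "b + 1 \<noteq> 0" using assms(2) by simp
  define t where "t = - a / (b + 1)"
  have "(b + 1) * t = - a"
    using \<open>b + 1 \<noteq> 0\<close> by (simp add: t_def)
  have "(b + 1)\<^sup>2 * (a * t + b * t\<^sup>2) = a * (b + 1) * ((b + 1) * t) + b * ((b + 1) * t)\<^sup>2"
    by (simp add: power2_eq_square algebra_simps)
  also have "\<dots> = - a\<^sup>2"
    using \<open>(b + 1) * t = - a\<close> by (simp add: power2_eq_square algebra_simps)
  finally have "(b + 1)\<^sup>2 * (a * t + b * t\<^sup>2) = - a\<^sup>2" .
  moreover have "0 \<le> (b + 1)\<^sup>2 * (a * t + b * t\<^sup>2)"
    using assms(1) by simp
  ultimately show ?thesis by simp
qed

lemma psd_null_vector: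
  assumes "psd A" and "Re (sesq A x x) = 0"
  shows "A *v x = 0"
proof -
  have herm: "hermitian A" and pos: "\<And>z. 0 \<le> Re (sesq A z z)"
    using assms(1) by (simp_all add: psd_iff_sesq)
  have Re_zero: "Re (sesq A y x) = 0" for y
  proof -
    have "0 \<le> (2 * Re (sesq A y x)) * t + Re (sesq A y y) * t\<^sup>2" for t :: real
    proof -
      let ?z = "x + complex_of_real t *s y"
      have "sesq A ?z ?z = sesq A x x + of_real t * (sesq A x y + sesq A y x) + (of_real t)\<^sup>2 * sesq A y y"
        by (simp add: sesq_add_left sesq_add_right sesq_scale_left sesq_scale_right algebra_simps
            power2_eq_square)
      then have "Re (sesq A ?z ?z) = (2 * Re (sesq A y x)) * t + Re (sesq A y y) * t\<^sup>2"
        using assms(2) sesq_hermitian_commute[OF herm, of y x] by (simp add: power2_eq_square)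
      then show ?thesis using pos by metis
    qed
    then show ?thesis using quadratic_nonneg_imp_linear_coeff_0 pos by fastforce
  qed
  \<comment> \<open>Replacing y by i y turns the vanishing of the real part into that of the imaginary part.\<close>
  have "sesq A y x = 0" for y
    using Re_zero[of y] Re_zero[of "\<i> *s y"] by (simp add: sesq_scale_left complex_eq_iff)
  then show ?thesis
    by (simp add: vec_eq_iff flip: sesq_axis_left)
qed

lemma psd_zero_diagonal:
  assumes "psd A" and "A $ j $ j = 0"
  shows "A $ i $ j = 0" and "A $ j $ i = 0"
proof -
  have "A *v axis j 1 = 0"
    using psd_null_vector[OF assms(1)] assms(2) by (simp add: sesq_axis)
  then show "A $ i $ j = 0"
    by (simp add: matrix_vector_axis column_def vec_eq_iff)
  then show "A $ j $ i = 0"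
    using hermitian_cnj_entry[OF psd_hermitian[OF assms(1)], of i j] by simp
qed

lemma psd_diagonal_real_nonneg:
  assumes "psd A"
  shows "A $ i $ i = of_real (Re (A $ i $ i))" and "0 \<le> Re (A $ i $ i)"
proof -
  have "cnj (A $ i $ i) = A $ i $ i"
    using hermitian_cnj_entry[OF psd_hermitian[OF assms]] .
  then show "A $ i $ i = of_real (Re (A $ i $ i))"
    by (metis Reals_cnj_iff complex_is_Real_iff of_real_Re)
  show "0 \<le> Re (A $ i $ i)"
    using psd_sesq_nonneg[OF assms, of "axis i 1"] by (simp add: sesq_axis)
qed

definition outer :: "complex^('n::finite) \<Rightarrow> complex^'n \<Rightarrow> complex^'n^'n" where
  "outer u w = (\<chi> i j. u $ i * cnj (w $ j))"

lemma sesq_outer: "sesq (outer u w) x y = cinner x u * cinner w y"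
  by (simp add: sesq_expand outer_def cinner_def sum_product mult_ac)

lemma outer_matrix_vector: "outer u u *v v = cinner u v *s u"
  by (simp add: outer_def matrix_vector_mult_def cinner_def vec_eq_iff sum_distrib_left mult_ac)

lemma hermitian_outer: "hermitian (outer u u)"
  by (rule hermitianI) (simp add: outer_def mult.commute)

lemma sesq_schur_complement:
  fixes x :: "complex^'n::finite" and a :: real
  assumes "hermitian A" and "A $ i $ i = of_real a" and "a \<noteq> 0"
  defines "\<alpha> \<equiv> sesq A (axis i 1) x"
  defines "y \<equiv> x - (\<alpha> / of_real a) *s axis i 1"
  shows "sesq A y y = sesq A x x - cnj \<alpha> * \<alpha> / of_real a"
proof -
  have "sesq A (axis i 1) (axis i 1) = of_real a" and "sesq A x (axis i 1) = cnj \<alpha>"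
    using assms(2) sesq_hermitian_commute[OF assms(1), of "axis i 1" x]
    by (simp_all add: \<alpha>_def sesq_axis)
  then show ?thesis
    using assms(3) by (simp add: y_def \<alpha>_def[symmetric] sesq_diff_left sesq_diff_right
        sesq_scale_left sesq_scale_right field_simps)
qed

text \<open>One pivot step of a Cholesky factorisation: what remains is the Schur complement.\<close>

lemma psd_subtract_outer_column:
  assumes "psd A" and "A $ i $ i \<noteq> 0"
  defines "u \<equiv> (1 / of_real (sqrt (Re (A $ i $ i)))) *s column i A"
  shows "psd (A - outer u u)" and "(A - outer u u) $ i $ i = 0"
    and "\<And>j. A $ j $ j = 0 \<Longrightarrow> (A - outer u u) $ j $ j = 0"
proof -
  have herm: "hermitian A"
    using assms(1) by (rule psd_hermitian)
  define a where "a = Re (A $ i $ i)"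
  have Aii: "A $ i $ i = of_real a" and "0 \<le> a"
    using psd_diagonal_real_nonneg[OF assms(1), of i] by (simp_all add: a_def)
  with assms(2) have "0 < a" by auto
  have sqrt_sq: "cnj (1 / of_real (sqrt a)) * (1 / of_real (sqrt a)) = 1 / (of_real a :: complex)"
    using \<open>0 \<le> a\<close> by (simp flip: of_real_mult)
  have outer_entry: "outer u u $ r $ s = A $ r $ i * A $ i $ s / of_real a" for r s
    using sqrt_sq
    by (simp add: u_def a_def[symmetric] outer_def column_def hermitian_cnj_entry[OF herm] field_simps)
  show "(A - outer u u) $ i $ i = 0"
    using \<open>0 < a\<close> by (simp add: outer_entry Aii power2_eq_square)
  show "(A - outer u u) $ j $ j = 0" if "A $ j $ j = 0" for j
    using psd_zero_diagonal[OF assms(1) that] that by (simp add: outer_entry)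
  have "0 \<le> Re (sesq (A - outer u u) x x)" for x
  proof -
    define \<alpha> where "\<alpha> = sesq A (axis i 1) x"
    have "cinner (column i A) x = \<alpha>"
      using sesq_hermitian_commute[OF herm, of x "axis i 1"]
      by (simp add: \<alpha>_def sesq_def cinner_commute[of x] matrix_vector_axis)
    then have "cinner u x = \<alpha> * (1 / of_real (sqrt a))"
      by (simp add: u_def a_def cinner_scale_left)
    then have "sesq (outer u u) x x = cnj \<alpha> * \<alpha> / of_real a"
      using sqrt_sq by (simp add: sesq_outer cinner_commute[of x u] field_simps)
    then have "sesq (A - outer u u) x x =
        sesq A (x - (\<alpha> / of_real a) *s axis i 1) (x - (\<alpha> / of_real a) *s axis i 1)"
      using sesq_schur_complement[OF herm Aii] \<open>0 < a\<close> by (simp add: sesq_diff_matrix \<alpha>_def)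
    then show ?thesis
      using psd_sesq_nonneg[OF assms(1)] by simp
  qed
  then show "psd (A - outer u u)"
    using hermitian_diff[OF herm hermitian_outer] by (simp add: psd_iff_sesq)
qed

lemma psd_sum_outer:
  assumes "psd A"
  shows "\<exists>us. A = (\<Sum>u\<leftarrow>us. outer u u)"
  using assms
proof (induction "card {j. A $ j $ j \<noteq> 0}" arbitrary: A rule: less_induct)
  case less
  show ?case
  proof (cases "\<exists>i. A $ i $ i \<noteq> 0")
    case False
    then have "A = 0"
      using psd_zero_diagonal(1)[OF less.prems] by (simp add: vec_eq_iff)
    then show ?thesis
      by (intro exI[of _ "[]"]) simp
  next
    case True
    then obtain i where i: "A $ i $ i \<noteq> 0" by blast
    define u where "u = (1 / of_real (sqrt (Re (A $ i $ i)))) *s column i A"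
    note step = psd_subtract_outer_column[OF less.prems i, folded u_def]
    have "{j. (A - outer u u) $ j $ j \<noteq> 0} \<subseteq> {j. A $ j $ j \<noteq> 0} - {i}"
      using step(2,3) by auto
    then have "card {j. (A - outer u u) $ j $ j \<noteq> 0} \<le> card ({j. A $ j $ j \<noteq> 0} - {i})"
      by (intro card_mono) simp_all
    also have "\<dots> < card {j. A $ j $ j \<noteq> 0}"
      using i by (intro card_Diff1_less) simp_all
    finally obtain us where "A - outer u u = (\<Sum>u\<leftarrow>us. outer u u)"
      using less.hyps step(1) by blast
    then show ?thesis
      by (intro exI[of _ "u # us"]) (simp flip: \<open>A - outer u u = _\<close>)
  qed
qed

lemma Re_sum_list: "Re (sum_list xs) = sum_list (map Re xs)"
  by (induction xs) simp_all

lemma psd_sum_list_null_vector: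
  assumes "psd A" and "Re (\<Sum>u\<leftarrow>us. sesq A (f u) (f u)) = 0" and "u \<in> set us"
  shows "A *v f u = 0"
proof -
  have "\<forall>r\<in>set (map (\<lambda>u. Re (sesq A (f u) (f u))) us). r = 0"
    using assms(2) psd_sesq_nonneg[OF assms(1)]
    by (subst sum_list_nonneg_eq_0_iff[symmetric]) (auto simp: Re_sum_list o_def)
  then show ?thesis
    using assms(3) by (intro psd_null_vector[OF assms(1)]) simp
qed

lemma linear_sum_list: "linear f \<Longrightarrow> f (sum_list xs) = sum_list (map f xs)"
  by (induction xs) (simp_all add: linear_0 linear_add)

lemma sesq_sum_list_matrix: "sesq (sum_list As) x y = (\<Sum>A\<leftarrow>As. sesq A x y)"
  by (induction As) (simp_all add: sesq_add_matrix)

section \<open>The maps G and F\<close>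

definition tensor_vec :: "complex^('k::finite) \<Rightarrow> complex^('m::finite) \<Rightarrow> complex^('k \<times> 'm)" where
  "tensor_vec v p = (\<chi> q. v $ fst q * p $ snd q)"

lemma tensor_vec_add_left: "tensor_vec (v + w) p = tensor_vec v p + tensor_vec w p"
  and tensor_vec_add_right: "tensor_vec v (p + q) = tensor_vec v p + tensor_vec v q"
  and tensor_vec_scale_left: "tensor_vec (c *s v) p = c *s tensor_vec v p"
  and tensor_vec_scale_right: "tensor_vec v (c *s p) = c *s tensor_vec v p"
  and tensor_vec_zero_left [simp]: "tensor_vec 0 p = 0"
  and tensor_vec_zero_right [simp]: "tensor_vec v 0 = 0"
  by (simp_all add: tensor_vec_def vec_eq_iff algebra_simps)

lemma sum_UNIV_prod: "(\<Sum>q\<in>UNIV. f q) = (\<Sum>i\<in>UNIV. \<Sum>a\<in>UNIV. f (i, a))"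
  by (simp add: UNIV_Times_UNIV[symmetric] sum.cartesian_product del: UNIV_Times_UNIV)

lemma sesq_tensor_vec: "sesq \<gamma> (tensor_vec y p) (tensor_vec x q) =
  (\<Sum>i\<in>UNIV. \<Sum>a\<in>UNIV. \<Sum>j\<in>UNIV. \<Sum>b\<in>UNIV.
     cnj (y $ i) * cnj (p $ a) * \<gamma> $ (i, a) $ (j, b) * x $ j * q $ b)"
  by (simp add: sesq_expand sum_UNIV_prod tensor_vec_def sum_distrib_left mult_ac)

lemma sesq_Gmap_outer: "sesq (Gmap \<gamma> (outer x y)) p q = sesq \<gamma> (tensor_vec y p) (tensor_vec x q)"
proof -
  have "sesq (Gmap \<gamma> (outer x y)) p q =
    (\<Sum>a\<in>UNIV. \<Sum>b\<in>UNIV. \<Sum>i\<in>UNIV. \<Sum>j\<in>UNIV.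
       cnj (y $ i) * cnj (p $ a) * \<gamma> $ (i, a) $ (j, b) * x $ j * q $ b)"
    by (simp add: sesq_expand Gmap_def outer_def sum_distrib_left sum_distrib_right mult_ac)
  also have "\<dots> = (\<Sum>a\<in>UNIV. \<Sum>i\<in>UNIV. \<Sum>b\<in>UNIV. \<Sum>j\<in>UNIV.
       cnj (y $ i) * cnj (p $ a) * \<gamma> $ (i, a) $ (j, b) * x $ j * q $ b)"
    by (rule sum.cong[OF refl], rule sum.swap)
  also have "\<dots> = (\<Sum>i\<in>UNIV. \<Sum>a\<in>UNIV. \<Sum>b\<in>UNIV. \<Sum>j\<in>UNIV.
       cnj (y $ i) * cnj (p $ a) * \<gamma> $ (i, a) $ (j, b) * x $ j * q $ b)"
    by (rule sum.swap)
  also have "\<dots> = (\<Sum>i\<in>UNIV. \<Sum>a\<in>UNIV. \<Sum>j\<in>UNIV. \<Sum>b\<in>UNIV.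
       cnj (y $ i) * cnj (p $ a) * \<gamma> $ (i, a) $ (j, b) * x $ j * q $ b)"
    by (rule sum.cong[OF refl], rule sum.cong[OF refl], rule sum.swap)
  finally show ?thesis
    by (simp add: sesq_tensor_vec)
qed

lemma sesq_Fmap_outer: "sesq (Fmap \<gamma> (outer p p')) w v = sesq \<gamma> (tensor_vec w p') (tensor_vec v p)"
proof -
  have "sesq (Fmap \<gamma> (outer p p')) w v =
    (\<Sum>i\<in>UNIV. \<Sum>j\<in>UNIV. \<Sum>a\<in>UNIV. \<Sum>b\<in>UNIV.
       cnj (w $ i) * cnj (p' $ a) * \<gamma> $ (i, a) $ (j, b) * v $ j * p $ b)"
    by (simp add: sesq_expand Fmap_def outer_def sum_distrib_left sum_distrib_right mult_ac)
  also have "\<dots> = (\<Sum>i\<in>UNIV. \<Sum>a\<in>UNIV. \<Sum>j\<in>UNIV. \<Sum>b\<in>UNIV.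
       cnj (w $ i) * cnj (p' $ a) * \<gamma> $ (i, a) $ (j, b) * v $ j * p $ b)"
    by (rule sum.cong[OF refl], rule sum.swap)
  finally show ?thesis
    by (simp add: sesq_tensor_vec)
qed

lemma linear_Gmap: "linear (Gmap \<gamma>)"
  by (rule linearI)
    (simp_all add: Gmap_def vec_eq_iff algebra_simps sum.distrib scaleR_sum_right)

lemma linear_Fmap: "linear (Fmap \<gamma>)"
  by (rule linearI)
    (simp_all add: Fmap_def vec_eq_iff algebra_simps sum.distrib scaleR_sum_right)

lemma hermitian_Gmap:
  assumes "hermitian \<gamma>" and "hermitian X"
  shows "hermitian (Gmap \<gamma> X)"
proof (rule hermitianI)
  fix a b
  have "Gmap \<gamma> X $ b $ a = (\<Sum>i\<in>UNIV. \<Sum>j\<in>UNIV. \<gamma> $ (i, b) $ (j, a) * X $ j $ i)"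
    by (simp add: Gmap_def)
  also have "\<dots> = (\<Sum>j\<in>UNIV. \<Sum>i\<in>UNIV. \<gamma> $ (i, b) $ (j, a) * X $ j $ i)"
    by (rule sum.swap)
  also have "\<dots> = cnj (Gmap \<gamma> X $ a $ b)"
    by (simp add: Gmap_def hermitian_cnj_entry[OF assms(1)] hermitian_cnj_entry[OF assms(2)])
  finally show "Gmap \<gamma> X $ b $ a = cnj (Gmap \<gamma> X $ a $ b)" .
qed

lemma hermitian_Fmap:
  assumes "hermitian \<gamma>" and "hermitian Y"
  shows "hermitian (Fmap \<gamma> Y)"
proof (rule hermitianI)
  fix i j
  have "Fmap \<gamma> Y $ j $ i = (\<Sum>a\<in>UNIV. \<Sum>b\<in>UNIV. \<gamma> $ (j, a) $ (i, b) * Y $ b $ a)"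
    by (simp add: Fmap_def)
  also have "\<dots> = (\<Sum>b\<in>UNIV. \<Sum>a\<in>UNIV. \<gamma> $ (j, a) $ (i, b) * Y $ b $ a)"
    by (rule sum.swap)
  also have "\<dots> = cnj (Fmap \<gamma> Y $ i $ j)"
    by (simp add: Fmap_def hermitian_cnj_entry[OF assms(1)] hermitian_cnj_entry[OF assms(2)])
  finally show "Fmap \<gamma> Y $ j $ i = cnj (Fmap \<gamma> Y $ i $ j)" .
qed

lemma sesq_Gmap_sum_outer:
  "sesq (Gmap \<gamma> (\<Sum>u\<leftarrow>us. outer u u)) q q = (\<Sum>u\<leftarrow>us. sesq \<gamma> (tensor_vec u q) (tensor_vec u q))"
  by (simp add: linear_sum_list[OF linear_Gmap] sesq_sum_list_matrix o_def sesq_Gmap_outer)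

lemma sesq_Fmap_sum_outer:
  "sesq (Fmap \<gamma> (\<Sum>u\<leftarrow>us. outer u u)) w w = (\<Sum>u\<leftarrow>us. sesq \<gamma> (tensor_vec w u) (tensor_vec w u))"
  by (simp add: linear_sum_list[OF linear_Fmap] sesq_sum_list_matrix o_def sesq_Fmap_outer)

lemma psd_Gmap:
  assumes "psd \<gamma>" and "psd X"
  shows "psd (Gmap \<gamma> X)"
proof -
  obtain us where us: "X = (\<Sum>u\<leftarrow>us. outer u u)"
    using psd_sum_outer[OF assms(2)] by blast
  have "0 \<le> Re (sesq (Gmap \<gamma> X) q q)" for q
    using psd_sesq_nonneg[OF assms(1)]
    by (simp add: us sesq_Gmap_sum_outer Re_sum_list) (intro sum_list_nonneg, auto)
  then show ?thesis
    using hermitian_Gmap[OF psd_hermitian psd_hermitian, OF assms] by (simp add: psd_iff_sesq)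
qed

lemma psd_Fmap:
  assumes "psd \<gamma>" and "psd Y"
  shows "psd (Fmap \<gamma> Y)"
proof -
  obtain us where us: "Y = (\<Sum>u\<leftarrow>us. outer u u)"
    using psd_sum_outer[OF assms(2)] by blast
  have "0 \<le> Re (sesq (Fmap \<gamma> Y) w w)" for w
    using psd_sesq_nonneg[OF assms(1)]
    by (simp add: us sesq_Fmap_sum_outer Re_sum_list) (intro sum_list_nonneg, auto)
  then show ?thesis
    using hermitian_Fmap[OF psd_hermitian psd_hermitian, OF assms] by (simp add: psd_iff_sesq)
qed

lemma tr_inner_expand: "tr_inner A B = (\<Sum>i\<in>UNIV. \<Sum>j\<in>UNIV. A $ i $ j * cnj (B $ i $ j))"
  by (simp add: tr_inner_def trace_def matrix_matrix_mult_def adj_def)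

lemma tr_inner_commute: "tr_inner B A = cnj (tr_inner A B)"
  by (simp add: tr_inner_expand mult.commute)

lemma tr_inner_diff_left: "tr_inner (X - Y) Z = tr_inner X Z - tr_inner Y Z"
  and tr_inner_add_right: "tr_inner X (Y + Z) = tr_inner X Y + tr_inner X Z"
  by (simp_all add: tr_inner_expand algebra_simps sum.distrib sum_subtractf)

lemma tr_inner_self_eq_0_iff: "tr_inner X X = 0 \<longleftrightarrow> X = 0"
proof -
  define S where "S = (\<Sum>i\<in>UNIV. \<Sum>j\<in>UNIV. (cmod (X $ i $ j))\<^sup>2)"
  have "tr_inner X X = of_real S"
    unfolding S_def tr_inner_expand of_real_sum
    by (intro sum.cong refl) (rule complex_norm_square[symmetric])
  then have "tr_inner X X = 0 \<longleftrightarrow> S = 0"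
    by simp
  also have "S = 0 \<longleftrightarrow> X = 0"
    by (simp add: S_def sum_nonneg_eq_0_iff sum_nonneg vec_eq_iff)
  finally show ?thesis .
qed

lemma tr_inner_compress:
  assumes "hermitian P"
  shows "tr_inner (P ** A ** P) Z = tr_inner A (P ** Z ** P)"
proof -
  have "trace (P ** A ** P ** adj Z) = trace (A ** (P ** adj Z ** P))"
    using trace_mul_sym[of P "A ** P ** adj Z"] by (simp add: matrix_mul_assoc)
  then show ?thesis
    using assms by (simp add: tr_inner_def adj_matrix_mult hermitian_def matrix_mul_assoc)
qed

lemma tr_inner_orthogonal_corners:
  assumes "hermitian V" and "P ** V = 0"
  shows "tr_inner (P ** A ** P) (V ** B ** V) = 0"
proof -
  have "P ** A ** P ** adj (V ** B ** V) = P ** A ** (P ** V) ** adj B ** V"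
    using assms(1) by (simp add: adj_matrix_mult hermitian_def matrix_mul_assoc)
  then show ?thesis
    using assms(2) by (simp add: tr_inner_def trace_def)
qed

lemma tr_inner_Gmap_Fmap:
  assumes "hermitian \<gamma>"
  shows "tr_inner (Gmap \<gamma> X) Y = tr_inner X (Fmap \<gamma> Y)"
proof -
  have "tr_inner (Gmap \<gamma> X) Y =
     (\<Sum>a\<in>UNIV. \<Sum>b\<in>UNIV. \<Sum>i\<in>UNIV. \<Sum>j\<in>UNIV. \<gamma> $ (i, a) $ (j, b) * X $ j $ i * cnj (Y $ a $ b))"
    by (simp add: tr_inner_expand Gmap_def sum_distrib_right)
  also have "\<dots> = (\<Sum>a\<in>UNIV. \<Sum>i\<in>UNIV. \<Sum>b\<in>UNIV. \<Sum>j\<in>UNIV.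
       \<gamma> $ (i, a) $ (j, b) * X $ j $ i * cnj (Y $ a $ b))"
    by (rule sum.cong[OF refl], rule sum.swap)
  also have "\<dots> = (\<Sum>i\<in>UNIV. \<Sum>a\<in>UNIV. \<Sum>b\<in>UNIV. \<Sum>j\<in>UNIV.
       \<gamma> $ (i, a) $ (j, b) * X $ j $ i * cnj (Y $ a $ b))"
    by (rule sum.swap)
  also have "\<dots> = (\<Sum>i\<in>UNIV. \<Sum>a\<in>UNIV. \<Sum>j\<in>UNIV. \<Sum>b\<in>UNIV.
       \<gamma> $ (i, a) $ (j, b) * X $ j $ i * cnj (Y $ a $ b))"
    by (rule sum.cong[OF refl], rule sum.cong[OF refl], rule sum.swap)
  also have "\<dots> = (\<Sum>i\<in>UNIV. \<Sum>j\<in>UNIV. \<Sum>a\<in>UNIV. \<Sum>b\<in>UNIV.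
       \<gamma> $ (i, a) $ (j, b) * X $ j $ i * cnj (Y $ a $ b))"
    by (rule sum.cong[OF refl], rule sum.swap)
  also have "\<dots> = (\<Sum>j\<in>UNIV. \<Sum>i\<in>UNIV. \<Sum>a\<in>UNIV. \<Sum>b\<in>UNIV.
       \<gamma> $ (i, a) $ (j, b) * X $ j $ i * cnj (Y $ a $ b))"
    by (rule sum.swap)
  also have "\<dots> = (\<Sum>j\<in>UNIV. \<Sum>i\<in>UNIV. \<Sum>b\<in>UNIV. \<Sum>a\<in>UNIV.
       \<gamma> $ (i, a) $ (j, b) * X $ j $ i * cnj (Y $ a $ b))"
    by (rule sum.cong[OF refl], rule sum.cong[OF refl], rule sum.swap)
  also have "\<dots> = tr_inner X (Fmap \<gamma> Y)"
    by (simp add: tr_inner_expand Fmap_def sum_distrib_left hermitian_cnj_entry[OF assms] mult_ac)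
  finally show ?thesis .
qed

lemma self_adjoint_Fmap_Gmap:
  assumes "hermitian \<gamma>"
  shows "self_adjoint_map (Fmap \<gamma> \<circ> Gmap \<gamma>)"
  unfolding self_adjoint_map_def
proof (intro allI)
  fix X Y
  have "tr_inner (Fmap \<gamma> (Gmap \<gamma> X)) Y = cnj (tr_inner Y (Fmap \<gamma> (Gmap \<gamma> X)))"
    by (rule tr_inner_commute)
  also have "\<dots> = cnj (tr_inner (Gmap \<gamma> Y) (Gmap \<gamma> X))"
    by (simp add: tr_inner_Gmap_Fmap[OF assms])
  also have "\<dots> = tr_inner (Gmap \<gamma> X) (Gmap \<gamma> Y)"
    by (simp add: tr_inner_commute[of "Gmap \<gamma> X"])
  also have "\<dots> = tr_inner X (Fmap \<gamma> (Gmap \<gamma> Y))"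
    by (rule tr_inner_Gmap_Fmap[OF assms])
  finally show "tr_inner ((Fmap \<gamma> \<circ> Gmap \<gamma>) X) Y = tr_inner X ((Fmap \<gamma> \<circ> Gmap \<gamma>) Y)"
    by simp
qed

lemma positive_map_Fmap_Gmap:
  assumes "psd \<gamma>"
  shows "positive_map (Fmap \<gamma> \<circ> Gmap \<gamma>)"
  using linear_compose[OF linear_Gmap linear_Fmap] psd_Fmap[OF assms] psd_Gmap[OF assms]
  by (simp add: positive_map_def)

lemma orth_proj_idem: "orth_proj V \<Longrightarrow> V ** V = V"
  and orth_proj_hermitian: "orth_proj V \<Longrightarrow> hermitian V"
  by (simp_all add: orth_proj_def)

lemma orth_proj_complement:
  assumes "orth_proj V"
  shows "orth_proj (mat 1 - V)" and "V ** (mat 1 - V) = 0" and "(mat 1 - V) ** V = 0"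
proof -
  have "hermitian (mat 1 - V)"
    using hermitian_diff[OF hermitian_mat[of 1] orth_proj_hermitian[OF assms]] by simp
  then show "orth_proj (mat 1 - V)" and "V ** (mat 1 - V) = 0" and "(mat 1 - V) ** V = 0"
    using assms by (simp_all add: orth_proj_def matrix_diff_ldistrib matrix_diff_rdistrib)
qed

lemma psd_orth_proj:
  assumes "orth_proj V"
  shows "psd V"
proof -
  have "sesq V x x = cinner (V *v x) (V *v x)" for x
    using assms by (simp add: sesq_def cinner_matrix_vector matrix_vector_mul_assoc orth_proj_def
        hermitian_def)
  then have "0 \<le> Re (sesq V x x)" for x
    by (simp add: cinner_self_nonneg)
  then show ?thesis
    using assms by (simp add: psd_iff_sesq orth_proj_def)
qed

lemma corner_iff:
  assumes "orth_proj V"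
  shows "Y \<in> corner V V \<longleftrightarrow> V ** Y ** V = Y"
proof
  assume "Y \<in> corner V V"
  then obtain X where X: "Y = V ** X ** V"
    by (auto simp: corner_def)
  then have "V ** Y ** V = (V ** V) ** X ** (V ** V)"
    by (simp add: matrix_mul_assoc)
  then show "V ** Y ** V = Y"
    using orth_proj_idem[OF assms] X by simp
next
  assume "V ** Y ** V = Y"
  then show "Y \<in> corner V V"
    unfolding corner_def by (metis (mono_tags, lifting) mem_Collect_eq)
qed

lemma orth_proj_in_corner: "orth_proj V \<Longrightarrow> V \<in> corner V V"
  by (simp add: corner_iff orth_proj_idem)

lemma corner_mat_1: "corner (mat 1) (mat 1) = UNIV"
  by (auto simp: corner_def)

lemma orth_proj_mat_1: "orth_proj (mat 1)"
  using hermitian_mat[of 1] by (simp add: orth_proj_def)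

lemma hermitian_absorb_right:
  assumes "hermitian A" and "hermitian W" and "W ** A = A"
  shows "A ** W = A"
  using arg_cong[OF assms(3), of adj] assms(1,2) by (simp add: adj_matrix_mult hermitian_def)

lemma orth_proj_absorb_commute:
  assumes "orth_proj V" and "orth_proj W" and "V ** W = W"
  shows "W ** V = W"
  using hermitian_absorb_right[OF orth_proj_hermitian orth_proj_hermitian, OF assms(2,1,3)] .

lemma corner_subset_imp_absorb:
  assumes "orth_proj V" and "orth_proj W" and "corner W W \<subseteq> corner V V"
  shows "V ** W = W"
proof -
  have "V ** W ** V = W"
    using assms orth_proj_in_corner corner_iff by blast
  then have "V ** W = (V ** V) ** W ** V"
    by (metis matrix_mul_assoc)
  then show ?thesis
    using orth_proj_idem[OF assms(1)] \<open>V ** W ** V = W\<close> by simp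
qed

lemma orth_proj_diff:
  assumes "orth_proj V" and "orth_proj W" and "V ** W = W"
  shows "orth_proj (V - W)" and "V ** (V - W) = V - W"
proof -
  have "W ** V = W"
    by (rule orth_proj_absorb_commute[OF assms])
  then show "orth_proj (V - W)" and "V ** (V - W) = V - W"
    using assms
    by (simp_all add: orth_proj_def hermitian_diff matrix_diff_ldistrib matrix_diff_rdistrib)
qed

section \<open>Off-diagonal blocks under a positive partial transpose\<close>

lemma sum_outer_matrix_vector_in_span: "(\<Sum>u\<leftarrow>us. outer u u) *v v \<in> vec.span (set us)"
proof (induction us)
  case Nil
  show ?case by (simp add: vec.span_zero)
next
  case (Cons u us)
  have "outer u u *v v \<in> vec.span (set (u # us))"
    by (simp add: outer_matrix_vector vec.span_scale vec.span_base)
  moreover have "(\<Sum>u\<leftarrow>us. outer u u) *v v \<in> vec.span (set (u # us))"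
    using Cons.IH vec.span_mono[of "set us" "set (u # us)"] by auto
  ultimately show ?case
    by (simp add: matrix_vector_mult_add_rdistrib vec.span_add)
qed

lemma orthogonal_decomposition: "\<exists>y\<in>vec.span (set L). \<forall>p\<in>set L. cinner p (x - y) = 0"
proof (induction L arbitrary: x)
  case Nil
  show ?case by (intro bexI[of _ 0]) (simp_all add: vec.span_zero)
next
  case (Cons u L)
  obtain y1 where y1: "y1 \<in> vec.span (set L)" "\<forall>p\<in>set L. cinner p (x - y1) = 0"
    using Cons.IH by blast
  obtain yu where yu: "yu \<in> vec.span (set L)" "\<forall>p\<in>set L. cinner p (u - yu) = 0"
    using Cons.IH by blast
  have span_orth: "cinner y z = 0" if "y \<in> vec.span (set L)" and "\<forall>p\<in>set L. cinner p z = 0" for y z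
    using vec.span_minimal[of "set L" "{y. cinner y z = 0}"] that
    by (auto simp: vec.subspace_def cinner_add_left cinner_scale_left)
  have span_L: "vec.span (set L) \<subseteq> vec.span (set (u # L))"
    by (rule vec.span_mono) auto
  define zu where "zu = u - yu"
  show ?case
  proof (cases "zu = 0")
    case True
    then have "cinner u (x - y1) = 0"
      using span_orth[OF yu(1) y1(2)] by (simp add: zu_def)
    then show ?thesis
      using y1 span_L by auto
  next
    case False
    then have "cinner zu zu \<noteq> 0"
      using cinner_self_eq_0_iff[of zu] by auto
    define y where "y = y1 + (cinner zu (x - y1) / cinner zu zu) *s zu"
    have xy: "x - y = (x - y1) - (cinner zu (x - y1) / cinner zu zu) *s zu"
      by (simp add: y_def algebra_simps)
    have orth_L: "\<forall>p\<in>set L. cinner p (x - y) = 0"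
      using y1(2) yu(2) by (simp add: xy zu_def cinner_diff_right cinner_scale_right)
    have "cinner zu (x - y) = 0"
      using \<open>cinner zu zu \<noteq> 0\<close> by (simp add: xy cinner_diff_right cinner_scale_right)
    with span_orth[OF yu(1) orth_L] have "cinner u (x - y) = 0"
      by (simp add: zu_def cinner_diff_left)
    moreover have "y \<in> vec.span (set (u # L))"
      using y1(1) yu(1) span_L unfolding y_def zu_def
      by (intro vec.span_add vec.span_scale vec.span_diff) (auto intro: vec.span_base)
    ultimately show ?thesis
      using orth_L by auto
  qed
qed

lemma subspace_null_tensor_left: "vec.subspace {x. \<gamma> *v tensor_vec x z = 0}"
  and subspace_null_tensor_right: "vec.subspace {z. \<gamma> *v tensor_vec x z = 0}"
  by (simp_all add: vec.subspace_def tensor_vec_add_left tensor_vec_add_right tensor_vec_scale_left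
      tensor_vec_scale_right matrix_vector_right_distrib vector_scalar_commute)

lemma null_tensor_on_range:
  assumes "V = (\<Sum>x\<leftarrow>xs. outer x x)" and "V *v v = v"
    and "\<And>x. x \<in> set xs \<Longrightarrow> \<gamma> *v tensor_vec x z = 0"
  shows "\<gamma> *v tensor_vec v z = 0"
proof -
  have "v \<in> vec.span (set xs)"
    using sum_outer_matrix_vector_in_span[of xs v] assms(1,2) by simp
  then show ?thesis
    using vec.span_minimal[OF _ subspace_null_tensor_left, of "set xs"] assms(3) by blast
qed

definition vec_cnj :: "complex^('n::finite) \<Rightarrow> complex^'n" where
  "vec_cnj z = (\<chi> a. cnj (z $ a))"

lemma sesq_ptrans_tensor_vec:
  "sesq (ptrans \<gamma>) (tensor_vec w (vec_cnj q)) (tensor_vec v (vec_cnj p)) =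
   sesq \<gamma> (tensor_vec w p) (tensor_vec v q)"
proof -
  have "sesq (ptrans \<gamma>) (tensor_vec w (vec_cnj q)) (tensor_vec v (vec_cnj p)) =
    (\<Sum>i\<in>UNIV. \<Sum>a\<in>UNIV. \<Sum>j\<in>UNIV. \<Sum>b\<in>UNIV.
       cnj (w $ i) * q $ a * \<gamma> $ (i, b) $ (j, a) * v $ j * cnj (p $ b))"
    by (simp add: sesq_tensor_vec ptrans_def vec_cnj_def)
  also have "\<dots> = (\<Sum>i\<in>UNIV. \<Sum>a\<in>UNIV. \<Sum>b\<in>UNIV. \<Sum>j\<in>UNIV.
       cnj (w $ i) * q $ a * \<gamma> $ (i, b) $ (j, a) * v $ j * cnj (p $ b))"
    by (rule sum.cong[OF refl], rule sum.cong[OF refl], rule sum.swap)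
  also have "\<dots> = (\<Sum>i\<in>UNIV. \<Sum>b\<in>UNIV. \<Sum>a\<in>UNIV. \<Sum>j\<in>UNIV.
       cnj (w $ i) * q $ a * \<gamma> $ (i, b) $ (j, a) * v $ j * cnj (p $ b))"
    by (rule sum.cong[OF refl], rule sum.swap)
  also have "\<dots> = (\<Sum>i\<in>UNIV. \<Sum>b\<in>UNIV. \<Sum>j\<in>UNIV. \<Sum>a\<in>UNIV.
       cnj (w $ i) * q $ a * \<gamma> $ (i, b) $ (j, a) * v $ j * cnj (p $ b))"
    by (rule sum.cong[OF refl], rule sum.cong[OF refl], rule sum.swap)
  also have "\<dots> = sesq \<gamma> (tensor_vec w p) (tensor_vec v q)"
    by (simp add: sesq_tensor_vec mult_ac)
  finally show ?thesis .
qed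

text \<open>This is the only place where positivity of the partial transpose enters.\<close>

lemma ptrans_null_tensor_transfer:
  assumes "psd (ptrans \<gamma>)" and "\<gamma> *v tensor_vec v z = 0"
  shows "sesq \<gamma> (tensor_vec w z) (tensor_vec v q) = 0"
proof -
  have "Re (sesq (ptrans \<gamma>) (tensor_vec v (vec_cnj z)) (tensor_vec v (vec_cnj z))) = 0"
    unfolding sesq_ptrans_tensor_vec using assms(2) by (simp add: sesq_def)
  then have "ptrans \<gamma> *v tensor_vec v (vec_cnj z) = 0"
    by (rule psd_null_vector[OF assms(1)])
  then have "sesq (ptrans \<gamma>) (tensor_vec w (vec_cnj q)) (tensor_vec v (vec_cnj z)) = 0"
    by (simp add: sesq_def)
  then show ?thesis
    unfolding sesq_ptrans_tensor_vec .
qed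

lemma null_tensor_on_kernel:
  assumes "psd \<gamma>" and "Fmap \<gamma> Y \<in> corner V V" and "Y = (\<Sum>p\<leftarrow>ps. outer p p)"
    and "V *v w = 0" and "p \<in> set ps"
  shows "\<gamma> *v tensor_vec w p = 0"
proof -
  obtain U where "Fmap \<gamma> Y = V ** U ** V"
    using assms(2) by (auto simp: corner_def)
  then have "sesq (Fmap \<gamma> Y) w w = 0"
    using assms(4) by (simp add: sesq_def flip: matrix_vector_mul_assoc)
  then show ?thesis
    using psd_sum_list_null_vector[OF assms(1) _ assms(5), of "tensor_vec w"]
    by (simp add: assms(3) sesq_Fmap_sum_outer)
qed

lemma ppt_cross_term_zero:
  fixes \<gamma> :: "complex^('k::finite \<times> 'm::finite)^('k \<times> 'm)"
  assumes \<gamma>: "psd \<gamma>" and pt: "psd (ptrans \<gamma>)" and V: "orth_proj V"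
    and inv: "Fmap \<gamma> (Gmap \<gamma> V) \<in> corner V V"
    and v: "V *v v = v" and w: "V *v w = 0"
  shows "sesq \<gamma> (tensor_vec w p) (tensor_vec v q) = 0"
proof -
  have "psd V"
    using V by (rule psd_orth_proj)
  obtain xs where xs: "V = (\<Sum>x\<leftarrow>xs. outer x x)"
    using psd_sum_outer[OF \<open>psd V\<close>] by blast
  obtain ps where ps: "Gmap \<gamma> V = (\<Sum>p\<leftarrow>ps. outer p p)"
    using psd_sum_outer[OF psd_Gmap[OF \<gamma> \<open>psd V\<close>]] by blast
  have "\<gamma> *v tensor_vec w p' = 0" if "p' \<in> set ps" for p'
    using null_tensor_on_kernel[OF \<gamma> inv ps w that] .
  moreover obtain y where y: "y \<in> vec.span (set ps)" and z: "\<forall>p'\<in>set ps. cinner p' (p - y) = 0"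
    using orthogonal_decomposition by blast
  ultimately have "\<gamma> *v tensor_vec w y = 0"
    using vec.span_minimal[OF _ subspace_null_tensor_right, of "set ps"] by blast
  then have part_y: "sesq \<gamma> (tensor_vec w y) (tensor_vec v q) = 0"
    using sesq_hermitian_commute[OF psd_hermitian[OF \<gamma>], of "tensor_vec v q" "tensor_vec w y"]
    by (simp add: sesq_def)
  have "sesq (Gmap \<gamma> V) (p - y) (p - y) = 0"
    using z by (simp add: ps sesq_sum_list_matrix sesq_outer cong: map_cong)
  then have "\<gamma> *v tensor_vec x (p - y) = 0" if "x \<in> set xs" for x
    using psd_sum_list_null_vector[OF \<gamma> _ that, of "\<lambda>x. tensor_vec x (p - y)"]
    by (simp add: xs sesq_Gmap_sum_outer)
  then have "\<gamma> *v tensor_vec v (p - y) = 0"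
    using null_tensor_on_range[OF xs v] by blast
  then have part_z: "sesq \<gamma> (tensor_vec w (p - y)) (tensor_vec v q) = 0"
    by (rule ptrans_null_tensor_transfer[OF pt])
  have "tensor_vec w p = tensor_vec w y + tensor_vec w (p - y)"
    by (simp flip: tensor_vec_add_right)
  then show ?thesis
    using part_y part_z by (simp add: sesq_add_left)
qed

lemma Gmap_outer_entry:
  "Gmap \<gamma> (outer x y) $ a $ b = sesq \<gamma> (tensor_vec y (axis a 1)) (tensor_vec x (axis b 1))"
  using sesq_Gmap_outer[of \<gamma> x y "axis a 1" "axis b 1"] by (simp add: sesq_axis)

lemma Gmap_entry_linear_combination:
  assumes "\<And>j i. Z $ j $ i = (\<Sum>c\<in>UNIV. f c * M c $ j $ i)"
  shows "Gmap \<gamma> Z $ a $ b = (\<Sum>c\<in>UNIV. f c * Gmap \<gamma> (M c) $ a $ b)"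
proof -
  have "Gmap \<gamma> Z $ a $ b =
      (\<Sum>i\<in>UNIV. \<Sum>j\<in>UNIV. \<Sum>c\<in>UNIV. f c * (\<gamma> $ (i, a) $ (j, b) * M c $ j $ i))"
    by (simp add: Gmap_def assms sum_distrib_left mult_ac)
  also have "\<dots> = (\<Sum>i\<in>UNIV. \<Sum>c\<in>UNIV. \<Sum>j\<in>UNIV. f c * (\<gamma> $ (i, a) $ (j, b) * M c $ j $ i))"
    by (rule sum.cong[OF refl], rule sum.swap)
  also have "\<dots> = (\<Sum>c\<in>UNIV. \<Sum>i\<in>UNIV. \<Sum>j\<in>UNIV. f c * (\<gamma> $ (i, a) $ (j, b) * M c $ j $ i))"
    by (rule sum.swap)
  also have "\<dots> = (\<Sum>c\<in>UNIV. f c * Gmap \<gamma> (M c) $ a $ b)"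
    by (simp add: Gmap_def sum_distrib_left)
  finally show ?thesis .
qed

lemma matrix_triple_product_entry:
  assumes "hermitian C"
  shows "(A ** X ** C) $ j $ i =
    (\<Sum>cd\<in>UNIV. X $ fst cd $ snd cd * outer (column (fst cd) A) (column (snd cd) C) $ j $ i)"
proof -
  have "(A ** X ** C) $ j $ i = (\<Sum>d\<in>UNIV. \<Sum>c\<in>UNIV. A $ j $ c * X $ c $ d * C $ d $ i)"
    by (simp add: matrix_matrix_mult_def sum_distrib_right)
  also have "\<dots> = (\<Sum>c\<in>UNIV. \<Sum>d\<in>UNIV. A $ j $ c * X $ c $ d * C $ d $ i)"
    by (rule sum.swap)
  also have "\<dots> = (\<Sum>cd\<in>UNIV. X $ fst cd $ snd cd * outer (column (fst cd) A) (column (snd cd) C) $ j $ i)"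
    by (simp add: sum_UNIV_prod outer_def column_def hermitian_cnj_entry[OF assms] mult_ac)
  finally show ?thesis .
qed

lemma Gmap_triple_product_entry:
  assumes "hermitian C"
  shows "Gmap \<gamma> (A ** X ** C) $ a $ b =
    (\<Sum>cd\<in>UNIV. X $ fst cd $ snd cd * Gmap \<gamma> (outer (column (fst cd) A) (column (snd cd) C)) $ a $ b)"
  by (rule Gmap_entry_linear_combination[OF matrix_triple_product_entry[OF assms]])

lemma ppt_Gmap_off_diagonal:
  fixes \<gamma> :: "complex^('k::finite \<times> 'm::finite)^('k \<times> 'm)"
  assumes \<gamma>: "psd \<gamma>" and pt: "psd (ptrans \<gamma>)" and V: "orth_proj V"
    and inv: "Fmap \<gamma> (Gmap \<gamma> V) \<in> corner V V"
  shows "Gmap \<gamma> (V ** X ** (mat 1 - V)) = 0" and "Gmap \<gamma> ((mat 1 - V) ** X ** V) = 0"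
proof -
  define P where "P = mat 1 - V"
  have P: "orth_proj P" "V ** P = 0"
    using orth_proj_complement[OF V] by (simp_all add: P_def)
  have outer_zero: "Gmap \<gamma> (outer v w) = 0" "Gmap \<gamma> (outer w v) = 0"
    if "V *v v = v" and "V *v w = 0" for v w
  proof -
    have "Gmap \<gamma> (outer v w) $ a $ b = 0" and "Gmap \<gamma> (outer w v) $ a $ b = 0" for a b
      using ppt_cross_term_zero[OF \<gamma> pt V inv that, of "axis a 1" "axis b 1"]
        ppt_cross_term_zero[OF \<gamma> pt V inv that, of "axis b 1" "axis a 1"]
        sesq_hermitian_commute[OF psd_hermitian[OF \<gamma>],
          of "tensor_vec w (axis b 1)" "tensor_vec v (axis a 1)"]
      by (simp_all add: Gmap_outer_entry)
    then show "Gmap \<gamma> (outer v w) = 0" "Gmap \<gamma> (outer w v) = 0"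
      by (simp_all add: vec_eq_iff)
  qed
  have range: "V *v column c V = column c V" for c
    using orth_proj_idem[OF V] by (metis column_matrix_mult)
  have ker: "V *v column d P = 0" for d
    using P(2) column_matrix_mult[of d V P] by (simp add: column_def vec_eq_iff)
  have "Gmap \<gamma> (V ** X ** P) $ a $ b = 0" and "Gmap \<gamma> (P ** X ** V) $ a $ b = 0" for a b
    by (simp_all add: Gmap_triple_product_entry orth_proj_hermitian P V outer_zero[OF range ker])
  then show "Gmap \<gamma> (V ** X ** (mat 1 - V)) = 0" and "Gmap \<gamma> ((mat 1 - V) ** X ** V) = 0"
    by (simp_all add: vec_eq_iff P_def)
qed

lemma ppt_Gmap_split:
  fixes \<gamma> :: "complex^('k::finite \<times> 'm::finite)^('k \<times> 'm)"
  assumes \<gamma>: "psd \<gamma>" and pt: "psd (ptrans \<gamma>)" and V: "orth_proj V"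
    and inv: "Fmap \<gamma> (Gmap \<gamma> V) \<in> corner V V"
  shows "Gmap \<gamma> X = Gmap \<gamma> (V ** X ** V) + Gmap \<gamma> ((mat 1 - V) ** X ** (mat 1 - V))"
proof -
  define P where "P = mat 1 - V"
  have "X = (V + P) ** X ** (V + P)"
    by (simp add: P_def)
  also have "\<dots> = V ** X ** V + V ** X ** P + P ** X ** V + P ** X ** P"
    by (simp add: matrix_add_ldistrib matrix_add_rdistrib add_ac)
  finally have "Gmap \<gamma> X = Gmap \<gamma> (V ** X ** V + V ** X ** P + P ** X ** V + P ** X ** P)"
    by (rule arg_cong)
  then show ?thesis
    using ppt_Gmap_off_diagonal[OF assms] by (simp add: linear_add[OF linear_Gmap] P_def)
qed

section \<open>Invariant corners and complete reducibility\<close>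

definition corner_invariant ::
    "(complex^('n::finite)^'n \<Rightarrow> complex^'n^'n) \<Rightarrow> complex^'n^'n \<Rightarrow> bool" where
  "corner_invariant T V \<longleftrightarrow> T ` corner V V \<subseteq> corner V V"

definition orthogonal_projs :: "complex^('n::finite)^'n \<Rightarrow> complex^'n^'n \<Rightarrow> bool" where
  "orthogonal_projs A B \<longleftrightarrow> A ** B = 0 \<and> B ** A = 0"

lemma compress_eq_0_if_orthogonal_to_corner:
  assumes "orth_proj W" and "\<And>A. tr_inner X (W ** A ** W) = 0"
  shows "W ** X ** W = 0"
proof -
  have "tr_inner (W ** X ** W) (W ** X ** W) = tr_inner X (W ** (W ** X ** W) ** W)"
    by (rule tr_inner_compress[OF orth_proj_hermitian[OF assms(1)]])
  then show ?thesis
    using assms(2) by (simp add: tr_inner_self_eq_0_iff)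
qed

lemma corner_invariant_complement:
  assumes sa: "self_adjoint_map T" and V: "orth_proj V" and inv: "corner_invariant T V"
    and split: "\<And>X. T X = T (V ** X ** V) + T ((mat 1 - V) ** X ** (mat 1 - V))"
  shows "corner_invariant T (mat 1 - V)"
  unfolding corner_invariant_def
proof (intro image_subsetI)
  define P where "P = mat 1 - V"
  have P: "orth_proj P" "P ** V = 0"
    using orth_proj_complement[OF V] by (simp_all add: P_def)
  fix Y
  assume "Y \<in> corner (mat 1 - V) (mat 1 - V)"
  then have Y: "P ** Y ** P = Y"
    using corner_iff[OF P(1)] by (simp add: P_def)
  have "tr_inner (T Y) Z = tr_inner (P ** T Y ** P) Z" for Z
  proof -
    have TV: "V ** T (V ** Z ** V) ** V = T (V ** Z ** V)"
      using inv corner_iff[OF V] by (auto simp: corner_invariant_def corner_def)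
    have "tr_inner (T Y) Z = tr_inner Y (T (V ** Z ** V)) + tr_inner Y (T (P ** Z ** P))"
      using sa split[of Z] by (simp add: self_adjoint_map_def tr_inner_add_right P_def)
    also have "tr_inner Y (T (V ** Z ** V)) = 0"
      using tr_inner_orthogonal_corners[OF orth_proj_hermitian[OF V] P(2)] Y TV by metis
    also have "tr_inner Y (T (P ** Z ** P)) = tr_inner (P ** T Y ** P) Z"
      using sa tr_inner_compress[OF orth_proj_hermitian[OF P(1)]] by (simp add: self_adjoint_map_def)
    finally show ?thesis by simp
  qed
  then have "tr_inner (T Y - P ** T Y ** P) (T Y - P ** T Y ** P) = 0"
    by (simp add: tr_inner_diff_left)
  then show "T Y \<in> corner (mat 1 - V) (mat 1 - V)"
    using corner_iff[OF P(1)] by (simp add: tr_inner_self_eq_0_iff P_def)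
qed

lemma corner_invariant_diff:
  assumes V: "orth_proj V" and W: "orth_proj W" and "V ** W = W"
    and inv_V: "corner_invariant T V" and inv_P: "corner_invariant T (mat 1 - W)"
  shows "corner_invariant T (V - W)"
  unfolding corner_invariant_def
proof (intro image_subsetI)
  define P where "P = mat 1 - W"
  have P: "orth_proj P"
    using orth_proj_complement[OF W] by (simp add: P_def)
  have "W ** V = W"
    by (rule orth_proj_absorb_commute[OF V W \<open>V ** W = W\<close>])
  then have PV: "P ** V = V - W" and VP: "V ** P = V - W"
    using \<open>V ** W = W\<close> by (simp_all add: P_def matrix_diff_ldistrib matrix_diff_rdistrib)
  fix Y
  assume "Y \<in> corner (V - W) (V - W)"
  then obtain Z where Z: "Y = (V - W) ** Z ** (V - W)"
    by (auto simp: corner_def)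
  have "Y \<in> corner V V" and "Y \<in> corner P P"
    unfolding corner_def
    by (metis (mono_tags, lifting) PV VP Z matrix_mul_assoc mem_Collect_eq)+
  then have "T Y \<in> corner V V" and "T Y \<in> corner P P"
    using inv_V inv_P[folded P_def] by (auto simp: corner_invariant_def)
  then have "V ** T Y ** V = T Y" and "P ** T Y ** P = T Y"
    using corner_iff[OF V] corner_iff[OF P] by simp_all
  then have "(V - W) ** T Y ** (V - W) = T Y"
    by (metis PV VP matrix_mul_assoc)
  then show "T Y \<in> corner (V - W) (V - W)"
    using corner_iff[OF orth_proj_diff(1)[OF V W \<open>V ** W = W\<close>]] by simp
qed

lemma subspace_corner: "subspace (corner V V)"
  unfolding subspace_def corner_def
proof (intro conjI ballI allI)
  show "0 \<in> {V ** X ** V |X. True}"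
    by (rule CollectI, rule exI[of _ 0]) simp
  fix x y
  assume "x \<in> {V ** X ** V |X. True}" and "y \<in> {V ** X ** V |X. True}"
  then obtain X Y where "x = V ** X ** V" and "y = V ** Y ** V" by blast
  then show "x + y \<in> {V ** X ** V |X. True}"
    by (intro CollectI exI[of _ "X + Y"]) (simp add: matrix_add_ldistrib matrix_add_rdistrib)
next
  fix c :: real and x
  assume "x \<in> {V ** X ** V |X. True}"
  then obtain X where "x = V ** X ** V" by blast
  then show "c *\<^sub>R x \<in> {V ** X ** V |X. True}"
    by (intro CollectI exI[of _ "c *\<^sub>R X"]) (simp add: scalar_matrix_assoc matrix_scalar_ac)
qed

lemma dim_corner_less:
  assumes V: "orth_proj V" and W: "orth_proj W" and "V ** W = W" and "W \<noteq> V"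
  shows "dim (corner W W) < dim (corner V V)"
proof -
  have "W ** V = W"
    by (rule orth_proj_absorb_commute[OF V W \<open>V ** W = W\<close>])
  have "corner W W \<subseteq> corner V V"
  proof
    fix Y
    assume "Y \<in> corner W W"
    then obtain X where "Y = W ** X ** W"
      by (auto simp: corner_def)
    then have "V ** Y ** V = (V ** W) ** X ** (W ** V)"
      by (simp add: matrix_mul_assoc)
    then show "Y \<in> corner V V"
      using \<open>V ** W = W\<close> \<open>W ** V = W\<close> \<open>Y = W ** X ** W\<close> corner_iff[OF V] by simp
  qed
  moreover have "V \<notin> corner W W"
  proof
    assume "V \<in> corner W W"
    then have "W ** V ** W = V"
      using corner_iff[OF W] by simp
    then have "W ** V = V"
      using orth_proj_idem[OF W] by (metis matrix_mul_assoc)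
    with \<open>W ** V = W\<close> \<open>W \<noteq> V\<close> show False by simp
  qed
  ultimately have "span (corner W W) \<subset> span (corner V V)"
    using orth_proj_in_corner[OF V] by (auto simp: span_eq_iff[THEN iffD2, OF subspace_corner])
  then show ?thesis
    by (rule dim_psubset)
qed

lemma matrix_absorb_trans: "V ** W = W \<Longrightarrow> W ** A = A \<Longrightarrow> V ** A = (A :: 'a::semiring_1^'n^'n)"
  by (metis matrix_mul_assoc)

lemma absorbed_mult_eq_0:
  assumes "orth_proj A" and "orth_proj W" and "W ** A = A" and "U ** B = B" and "W ** U = 0"
  shows "A ** B = 0"
proof -
  have "A ** W = A"
    by (rule orth_proj_absorb_commute[OF assms(2,1,3)])
  then have "A ** B = A ** (W ** U) ** B"
    using assms(4) by (metis matrix_mul_assoc)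
  then show ?thesis
    using assms(5) by simp
qed

lemma corner_invariant_decomposition:
  assumes compl: "\<And>W. orth_proj W \<Longrightarrow> corner_invariant T W \<Longrightarrow> corner_invariant T (mat 1 - W)"
  shows "orth_proj V \<Longrightarrow> corner_invariant T V \<Longrightarrow>
    \<exists>Ws. (\<forall>W\<in>set Ws. orth_proj W \<and> corner_invariant T W \<and> irreducible_on T W \<and> V ** W = W)
      \<and> sorted_wrt orthogonal_projs Ws \<and> sum_list Ws = V"
proof (induction "dim (corner V V)" arbitrary: V rule: less_induct)
  case less
  note V = less.prems(1) and inv = less.prems(2)
  show ?case
  proof (cases "irreducible_on T V")
    case True
    then show ?thesis
      using V inv orth_proj_idem[OF V] by (intro exI[of _ "[V]"]) simp
  next
    case False
    then obtain W where W: "orth_proj W" and "corner W W \<subseteq> corner V V"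
      and inv_W: "corner_invariant T W" and "W \<noteq> 0" and "W \<noteq> V"
      unfolding irreducible_on_def corner_invariant_def by blast
    then have VW: "V ** W = W"
      using corner_subset_imp_absorb[OF V W] by blast
    define U where "U = V - W"
    have U: "orth_proj U" "V ** U = U" "U \<noteq> V"
      using orth_proj_diff[OF V W VW] \<open>W \<noteq> 0\<close> by (simp_all add: U_def)
    have WU: "W ** U = 0" and UW: "U ** W = 0"
      using VW orth_proj_absorb_commute[OF V W VW] orth_proj_idem[OF W]
      by (simp_all add: U_def matrix_diff_ldistrib matrix_diff_rdistrib)
    have inv_U: "corner_invariant T U"
      unfolding U_def by (rule corner_invariant_diff[OF V W VW inv compl[OF W inv_W]])
    obtain Ws1 where Ws1: "\<forall>A\<in>set Ws1. orth_proj A \<and> corner_invariant T A \<and> irreducible_on T A \<and> W ** A = A"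
      "sorted_wrt orthogonal_projs Ws1" "sum_list Ws1 = W"
      using less.hyps[OF dim_corner_less[OF V W VW \<open>W \<noteq> V\<close>] W inv_W] by blast
    obtain Ws2 where Ws2: "\<forall>B\<in>set Ws2. orth_proj B \<and> corner_invariant T B \<and> irreducible_on T B \<and> U ** B = B"
      "sorted_wrt orthogonal_projs Ws2" "sum_list Ws2 = U"
      using less.hyps[OF dim_corner_less[OF V U] U(1) inv_U] by blast
    have "orthogonal_projs A B" if "A \<in> set Ws1" and "B \<in> set Ws2" for A B
      using absorbed_mult_eq_0[OF _ W _ _ WU, of A B]
        absorbed_mult_eq_0[OF _ U(1) _ _ UW, of B A] Ws1(1) Ws2(1) that
      by (simp add: orthogonal_projs_def)
    moreover have "V ** A = A" if "A \<in> set (Ws1 @ Ws2)" for A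
      using that Ws1(1) Ws2(1) matrix_absorb_trans[OF VW] matrix_absorb_trans[OF U(2)] by auto
    ultimately show ?thesis
      using Ws1 Ws2 by (intro exI[of _ "Ws1 @ Ws2"]) (auto simp: sorted_wrt_append U_def)
  qed
qed

lemma matrix_mult_sum_list_eq_0:
  "(\<And>B. B \<in> set Bs \<Longrightarrow> A ** B = 0) \<Longrightarrow> (A :: 'a::semiring_1^'n^'n) ** sum_list Bs = 0"
  and sum_list_matrix_mult_eq_0:
  "(\<And>B. B \<in> set Bs \<Longrightarrow> B ** A = 0) \<Longrightarrow> sum_list Bs ** (A :: 'a::semiring_1^'n^'n) = 0"
  by (induction Bs) (simp_all add: matrix_add_ldistrib matrix_add_rdistrib)

lemma sum_corners_split:
  assumes "linear T"
    and split: "\<And>W X. W \<in> set Ws \<Longrightarrow> T X = T (W ** X ** W) + T ((mat 1 - W) ** X ** (mat 1 - W))"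
    and "\<forall>W\<in>set Ws. orth_proj W" and "sorted_wrt orthogonal_projs Ws"
  shows "T (sum_list Ws ** X ** sum_list Ws) = (\<Sum>W\<leftarrow>Ws. T (W ** X ** W))"
  using split assms(3,4)
proof (induction Ws)
  case Nil
  show ?case
    using linear_0[OF assms(1)] by simp
next
  case (Cons W Ws)
  define U where "U = sum_list Ws"
  have "W ** W = W"
    using Cons.prems(2) by (simp add: orth_proj_idem)
  moreover have "W ** U = 0" and "U ** W = 0"
    using Cons.prems(3) unfolding U_def
    by (auto intro!: matrix_mult_sum_list_eq_0 sum_list_matrix_mult_eq_0 simp: orthogonal_projs_def)
  ultimately have "W ** (W + U) = W" and "(W + U) ** W = W"
    and "(mat 1 - W) ** (W + U) = U" and "(W + U) ** (mat 1 - W) = U"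
    by (simp_all add: matrix_add_ldistrib matrix_add_rdistrib matrix_diff_ldistrib matrix_diff_rdistrib)
  then have "W ** ((W + U) ** X ** (W + U)) ** W = W ** X ** W"
    and "(mat 1 - W) ** ((W + U) ** X ** (W + U)) ** (mat 1 - W) = U ** X ** U"
    by (metis matrix_mul_assoc)+
  then have "T ((W + U) ** X ** (W + U)) = T (W ** X ** W) + T (U ** X ** U)"
    using Cons.prems(1)[of W "(W + U) ** X ** (W + U)"] by simp
  then show ?case
    using Cons.IH Cons.prems by (simp add: U_def)
qed

lemma corner_zero: "0 \<in> corner V V"
  unfolding corner_def by (rule CollectI, rule exI[of _ 0]) simp

lemma corner_subset_corner_sum:
  assumes "i < length Ws"
  shows "corner (Ws ! i) (Ws ! i) \<subseteq> corner_sum Ws"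
proof
  fix Z
  assume Z: "Z \<in> corner (Ws ! i) (Ws ! i)"
  define Y where "Y = (\<lambda>j. if j = i then Z else 0)"
  have "\<forall>j<length Ws. Y j \<in> corner (Ws ! j) (Ws ! j)"
    using Z by (auto simp: Y_def corner_zero)
  moreover have "Z = (\<Sum>j<length Ws. Y j)"
    using assms by (simp add: Y_def)
  ultimately show "Z \<in> corner_sum Ws"
    unfolding corner_sum_def by blast
qed

lemma positive_map_linear: "positive_map T \<Longrightarrow> linear T"
  by (simp add: positive_map_def)

lemma completely_reducibleI:
  assumes sa: "self_adjoint_map T" and pos: "positive_map T"
    and Ws: "\<forall>W\<in>set Ws. orth_proj W \<and> corner_invariant T W \<and> irreducible_on T W"
    and orth: "sorted_wrt orthogonal_projs Ws"
    and decomp: "\<And>X. T X = (\<Sum>W\<leftarrow>Ws. T (W ** X ** W))"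
  shows "completely_reducible T"
proof -
  have pairwise: "Ws ! i ** Ws ! j = 0" if "i < length Ws" and "j < length Ws" and "i \<noteq> j" for i j
    using orth that by (cases "i < j") (auto simp: sorted_wrt_iff_nth_less orthogonal_projs_def)
  have "T X = 0" if X: "X \<in> orth_compl (corner_sum Ws)" for X
  proof -
    have "W ** X ** W = 0" if W: "W \<in> set Ws" for W
    proof -
      obtain i where "i < length Ws" and "Ws ! i = W"
        using W by (meson in_set_conv_nth)
      then have "W ** A ** W \<in> corner_sum Ws" for A
        using corner_subset_corner_sum by (fastforce simp: corner_def)
      then show ?thesis
        using X Ws W by (intro compress_eq_0_if_orthogonal_to_corner) (auto simp: orth_compl_def)
    qed
    moreover have "T 0 = 0"
      by (rule linear_0[OF positive_map_linear[OF pos]])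
    ultimately show ?thesis
      using decomp[of X] by (simp cong: map_cong)
  qed
  then show ?thesis
    using sa pos Ws pairwise unfolding completely_reducible_def corner_invariant_def
    by (intro conjI exI[of _ Ws]) auto
qed

theorem completely_reducible_if_corners_split:
  assumes sa: "self_adjoint_map T" and pos: "positive_map T"
    and split: "\<And>V X. orth_proj V \<Longrightarrow> corner_invariant T V \<Longrightarrow>
      T X = T (V ** X ** V) + T ((mat 1 - V) ** X ** (mat 1 - V))"
  shows "completely_reducible T"
proof -
  have compl: "corner_invariant T (mat 1 - W)" if "orth_proj W" and "corner_invariant T W" for W
    by (rule corner_invariant_complement[OF sa that split[OF that]])
  have "corner_invariant T (mat 1)"
    by (simp add: corner_invariant_def corner_mat_1)
  then obtain Ws where
    Ws: "\<forall>W\<in>set Ws. orth_proj W \<and> corner_invariant T W \<and> irreducible_on T W \<and> mat 1 ** W = W"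
      "sorted_wrt orthogonal_projs Ws" "sum_list Ws = mat 1"
    using corner_invariant_decomposition[OF compl orth_proj_mat_1] by blast
  have split_Ws: "T X = T (W ** X ** W) + T ((mat 1 - W) ** X ** (mat 1 - W))"
    if "W \<in> set Ws" for W X
    using Ws(1) that by (intro split) auto
  have "T (sum_list Ws ** X ** sum_list Ws) = (\<Sum>W\<leftarrow>Ws. T (W ** X ** W))" for X
    by (rule sum_corners_split[OF positive_map_linear[OF pos] split_Ws]) (use Ws in auto)
  then have "T X = (\<Sum>W\<leftarrow>Ws. T (W ** X ** W))" for X
    unfolding Ws(3) matrix_mul_lid matrix_mul_rid .
  then show ?thesis
    using completely_reducibleI[OF sa pos _ Ws(2)] Ws(1) by blast
qed

theorem mainTheorem6:
  fixes \<gamma> :: "complex^('k::finite\<times>'m::finite)^('k\<times>'m)"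
  assumes "psd \<gamma>" and "psd (ptrans \<gamma>)"
  shows "\<gamma> \<in> CR"
proof -
  have "(Fmap \<gamma> \<circ> Gmap \<gamma>) X =
      (Fmap \<gamma> \<circ> Gmap \<gamma>) (V ** X ** V) + (Fmap \<gamma> \<circ> Gmap \<gamma>) ((mat 1 - V) ** X ** (mat 1 - V))"
    if "orth_proj V" and "corner_invariant (Fmap \<gamma> \<circ> Gmap \<gamma>) V" for V X
  proof -
    have "Fmap \<gamma> (Gmap \<gamma> V) \<in> corner V V"
      using that orth_proj_in_corner by (auto simp: corner_invariant_def)
    then have "Gmap \<gamma> X = Gmap \<gamma> (V ** X ** V) + Gmap \<gamma> ((mat 1 - V) ** X ** (mat 1 - V))"
      by (rule ppt_Gmap_split[OF assms that(1)])
    then show ?thesis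
      by (simp add: linear_add[OF linear_Fmap])
  qed
  then have "completely_reducible (Fmap \<gamma> \<circ> Gmap \<gamma>)"
    by (rule completely_reducible_if_corners_split[OF self_adjoint_Fmap_Gmap[OF psd_hermitian]
          positive_map_Fmap_Gmap, OF assms(1) assms(1)])
  then show ?thesis
    using assms(1) by (simp add: CR_def)
qed

end
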